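(* Let $P$ be a non-constant polynomial with complex coefficients such that $P(0)=0$. Then the map $\widehat P:C^\infty(\mathbb{R},\mathbb{C})\to C^\infty(\mathbb{R},\mathbb{C})$, $f\mapsto P(f)=P\circ f$, has dense range.
   Context: $C^\infty(\mathbb{R},\mathbb{C})$ is the Fréchet space of complex-valued smooth functions on $\mathbb{R}$ with seminorms $p_k(f)=\max_{0\le j\le k}\max_{t\in[-k,k]}|f^{(j)}(t)|$, $k\in\mathbb{N}$. *)

theory Defs
  imports "HOL-Analysis.Analysis" "HOL-Computational_Algebra.Polynomial"
begin

fun nth_deriv :: "nat \<Rightarrow> (real \<Rightarrow> complex) \<Rightarrow> real \<Rightarrow> complex" where
  "nth_deriv 0 f = f"
| "nth_deriv (Suc n) f = (\<lambda>t. vector_derivative (nth_deriv n f) (at t))"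

definition smooth_fun :: "(real \<Rightarrow> complex) \<Rightarrow> bool" where
  "smooth_fun f \<longleftrightarrow> (\<forall>n t. nth_deriv n f differentiable (at t))"

definition seminorm_p :: "nat \<Rightarrow> (real \<Rightarrow> complex) \<Rightarrow> real" where
  "seminorm_p k f = (SUP j\<in>{..k}. SUP t\<in>{- real k..real k}. norm (nth_deriv j f t))"

end

theory Submission
  imports Defs "HOL-Complex_Analysis.Complex_Analysis" "HOL-Computational_Algebra.Fundamental_Theorem_Algebra"
begin

text \<open>
  A smooth g is approximated by P \<circ> f with P \<circ> f - g a small constant c, so every seminorm of the
  error is |c|. The polynomial P has finitely many critical values and the image of a smooth curve
  is a null set in \<complex>, so a suitable small c makes g + c avoid all critical values. Off its critical
  values P is a proper local homeomorphism, hence a covering map, and g + c lifts along the simply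
  connected line to a continuous f with P \<circ> f = g + c. Locally f is a holomorphic local inverse
  of P composed with g + c, so f is smooth.
\<close>

section \<open>Finitely often differentiable functions\<close>

fun differentiable_upto :: "nat \<Rightarrow> (real \<Rightarrow> complex) \<Rightarrow> bool" where
  "differentiable_upto 0 f \<longleftrightarrow> (\<forall>t. f differentiable (at t))"
| "differentiable_upto (Suc n) f \<longleftrightarrow>
     (\<forall>t. f differentiable (at t)) \<and> differentiable_upto n (\<lambda>t. vector_derivative f (at t))"

lemma nth_deriv_Suc_inner: "nth_deriv (Suc n) f = nth_deriv n (\<lambda>t. vector_derivative f (at t))"
  by (induction n) auto

lemma differentiable_upto_iff:
  "differentiable_upto n f \<longleftrightarrow> (\<forall>m\<le>n. \<forall>t. nth_deriv m f differentiable (at t))"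
proof (induction n arbitrary: f)
  case (Suc n)
  have "(\<forall>m\<le>Suc n. \<forall>t. nth_deriv m f differentiable (at t)) \<longleftrightarrow>
        (\<forall>t. f differentiable (at t)) \<and> (\<forall>m\<le>n. \<forall>t. nth_deriv (Suc m) f differentiable (at t))"
    by (metis Suc_le_mono le0 nth_deriv.simps(1) not0_implies_Suc)
  then show ?case
    using Suc by (simp only: differentiable_upto.simps nth_deriv_Suc_inner)
qed auto

lemma smooth_fun_iff_differentiable_upto: "smooth_fun f \<longleftrightarrow> (\<forall>n. differentiable_upto n f)"
  unfolding smooth_fun_def differentiable_upto_iff by blast

lemma smooth_fun_imp_differentiable: "smooth_fun f \<Longrightarrow> f differentiable (at t)"
  unfolding smooth_fun_def by (metis nth_deriv.simps(1))

lemma differentiable_upto_SucI: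
  assumes "\<And>t. (f has_vector_derivative f' t) (at t)" and "differentiable_upto n f'"
  shows "differentiable_upto (Suc n) f"
proof -
  have "(\<lambda>t. vector_derivative f (at t)) = f'"
    using assms(1) vector_derivative_at by blast
  then show ?thesis
    using assms differentiableI_vector by auto
qed

lemma differentiable_upto_SucE:
  assumes "differentiable_upto (Suc n) f"
  obtains f' where "\<And>t. (f has_vector_derivative f' t) (at t)" and "differentiable_upto n f'"
  using assms
  by (intro that[of "\<lambda>t. vector_derivative f (at t)"]) (auto simp: vector_derivative_works[symmetric])

lemma differentiable_upto_Suc_imp: "differentiable_upto (Suc n) f \<Longrightarrow> differentiable_upto n f"
  by (induction n arbitrary: f) auto

lemma differentiable_upto_const: "differentiable_upto n (\<lambda>t. c)"
  by (induction n arbitrary: c) (auto intro!: differentiable_upto_SucI[where f'="\<lambda>t. 0"])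

lemma differentiable_upto_add:
  "differentiable_upto n a \<Longrightarrow> differentiable_upto n b \<Longrightarrow> differentiable_upto n (\<lambda>t. a t + b t)"
proof (induction n arbitrary: a b)
  case (Suc n)
  obtain a' b' where "\<And>t. (a has_vector_derivative a' t) (at t)" "differentiable_upto n a'"
    and "\<And>t. (b has_vector_derivative b' t) (at t)" "differentiable_upto n b'"
    using Suc.prems by (meson differentiable_upto_SucE)
  then show ?case
    by (intro differentiable_upto_SucI[where f'="\<lambda>t. a' t + b' t"] has_vector_derivative_add Suc.IH)
qed auto

lemma differentiable_upto_mult:
  "differentiable_upto n a \<Longrightarrow> differentiable_upto n b \<Longrightarrow> differentiable_upto n (\<lambda>t. a t * b t)"
proof (induction n arbitrary: a b)
  case (Suc n)
  obtain a' b' where "\<And>t. (a has_vector_derivative a' t) (at t)" "differentiable_upto n a'"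
    and "\<And>t. (b has_vector_derivative b' t) (at t)" "differentiable_upto n b'"
    using Suc.prems by (meson differentiable_upto_SucE)
  moreover have "differentiable_upto n a" "differentiable_upto n b"
    using Suc.prems differentiable_upto_Suc_imp by blast+
  ultimately show ?case
    by (intro differentiable_upto_SucI[where f'="\<lambda>t. a t * b' t + a' t * b t"]
        has_vector_derivative_mult differentiable_upto_add Suc.IH)
qed auto

lemma smooth_fun_add_const: "smooth_fun f \<Longrightarrow> smooth_fun (\<lambda>t. f t + c)"
  by (simp add: smooth_fun_iff_differentiable_upto differentiable_upto_add differentiable_upto_const)

lemma has_vector_derivative_holomorphic_comp:
  assumes "open S" "F holomorphic_on S" "(u has_vector_derivative u') (at t)" "u t \<in> S"
  shows "((\<lambda>t. F (u t)) has_vector_derivative u' * deriv F (u t)) (at t)"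
proof -
  have "(F has_field_derivative deriv F (u t)) (at (u t))"
    using assms by (meson DERIV_deriv_iff_field_differentiable holomorphic_on_imp_differentiable_at)
  then show ?thesis
    using field_vector_diff_chain_at[OF assms(3)] by (simp add: o_def)
qed

lemma differentiable_upto_holomorphic_comp:
  assumes "open S"
  shows "F holomorphic_on S \<Longrightarrow> differentiable_upto n u \<Longrightarrow> (\<And>t. u t \<in> S)
    \<Longrightarrow> differentiable_upto n (\<lambda>t. F (u t))"
proof (induction n arbitrary: F u)
  case 0
  then show ?case
    using has_vector_derivative_holomorphic_comp[OF assms] differentiableI_vector
    by (simp add: vector_derivative_works) blast
next
  case (Suc n)
  obtain u' where u': "\<And>t. (u has_vector_derivative u' t) (at t)" "differentiable_upto n u'"
    using Suc.prems(2) differentiable_upto_SucE by blast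
  have "differentiable_upto n (\<lambda>t. deriv F (u t))"
    using Suc assms differentiable_upto_Suc_imp holomorphic_deriv by blast
  then show ?case
    using u' Suc.prems assms
    by (intro differentiable_upto_SucI[where f'="\<lambda>t. u' t * deriv F (u t)"]
        differentiable_upto_mult has_vector_derivative_holomorphic_comp)
qed

lemma nth_deriv_const: "nth_deriv j (\<lambda>t. c) = (\<lambda>t. if j = 0 then c else 0)"
  by (induction j) (simp_all add: vector_derivative_const_at)

lemma seminorm_p_const: "seminorm_p k (\<lambda>t. c) = norm c"
proof -
  have "(SUP t\<in>{- real k..real k}. norm (nth_deriv j (\<lambda>t. c) t)) = (if j = 0 then norm c else 0)" for j
    by (simp add: nth_deriv_const)
  moreover have "(SUP j\<in>{..k}. if j = 0 then norm c else 0) = norm c"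
  proof (rule antisym)
    show "(SUP j\<in>{..k}. if j = 0 then norm c else 0) \<le> norm c"
      by (rule cSUP_least) auto
    show "norm c \<le> (SUP j\<in>{..k}. if j = 0 then norm c else 0)"
      using cSUP_upper[of 0 "{..k}" "\<lambda>j. if j = 0 then norm c else 0"] by simp
  qed
  ultimately show ?thesis
    by (simp add: seminorm_p_def)
qed

section \<open>Lifting through holomorphic maps\<close>

lemma has_vector_derivative_lift:
  assumes "open S" and holF: "F holomorphic_on S" and h: "h differentiable (at t)"
    and f: "isCont f t" "\<And>s. f s \<in> S" "\<And>s. F (f s) = h s" and F': "deriv F (f t) \<noteq> 0"
  shows "(f has_vector_derivative vector_derivative h (at t) / deriv F (f t)) (at t)"
proof -
  obtain r where r: "r > 0" "ball (f t) r \<subseteq> S" "inj_on F (ball (f t) r)"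
    using has_complex_derivative_locally_injective[OF holF f(2) \<open>open S\<close> F'] by blast
  have holF_ball: "F holomorphic_on ball (f t) r"
    using holF r(2) holomorphic_on_subset by blast
  obtain Q where Q: "Q holomorphic_on F ` ball (f t) r"
    and Q': "\<And>z. z \<in> ball (f t) r \<Longrightarrow> deriv F z * deriv Q (F z) = 1"
    and QF: "\<And>z. z \<in> ball (f t) r \<Longrightarrow> Q (F z) = z"
    using holomorphic_has_inverse[OF holF_ball open_ball r(3)] by blast
  have "h t \<in> F ` ball (f t) r"
    using r(1) f(3)[of t] by (metis centre_in_ball imageI)
  then have "((\<lambda>s. Q (h s)) has_vector_derivative vector_derivative h (at t) * deriv Q (h t)) (at t)"
    using Q h open_mapping_thm3[OF holF_ball open_ball r(3)]
    by (intro has_vector_derivative_holomorphic_comp) (simp_all add: vector_derivative_works[symmetric])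
  moreover have "deriv Q (h t) = 1 / deriv F (f t)"
    using Q'[of "f t"] r(1) f(3)[of t] F' by (simp add: field_simps)
  moreover obtain d where "d > 0" "\<And>s. dist s t < d \<Longrightarrow> dist (f s) (f t) < r"
    using f(1) r(1) continuous_at_eps_delta by blast
  then have "Q (h s) = f s" if "s \<in> ball t d" for s
    using that QF[of "f s"] f(3)[of s] by (simp add: dist_commute)
  ultimately show ?thesis
    using has_vector_derivative_transform_within_open[of "\<lambda>s. Q (h s)" _ t "ball t d" f] \<open>d > 0\<close>
    by simp
qed

lemma smooth_fun_lift:
  assumes "open S" and holF: "F holomorphic_on S" and h: "smooth_fun h"
    and f: "continuous_on UNIV f" "\<And>t. f t \<in> S" "\<And>t. F (f t) = h t"
    and F': "\<And>t. deriv F (f t) \<noteq> 0"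
  shows "smooth_fun f"
proof -
  let ?S' = "S \<inter> deriv F -` (- {0})"
  have "open ?S'"
    using \<open>open S\<close> holF
    by (intro continuous_open_preimage holomorphic_on_imp_continuous_on holomorphic_deriv) auto
  have "deriv F holomorphic_on ?S'"
    using holomorphic_deriv[OF holF \<open>open S\<close>] by (rule holomorphic_on_subset) auto
  then have inv_holF': "(\<lambda>z. inverse (deriv F z)) holomorphic_on ?S'"
    by (rule holomorphic_on_inverse) auto
  have h': "\<And>n. differentiable_upto n (\<lambda>t. vector_derivative h (at t))"
    using h by (metis differentiable_upto.simps(2) smooth_fun_iff_differentiable_upto)
  have dh: "\<And>t. h differentiable (at t)"
    using h by (metis differentiable_upto.simps(1) smooth_fun_iff_differentiable_upto)
  have f': "(f has_vector_derivative
      vector_derivative h (at t) * inverse (deriv F (f t))) (at t)" for t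
    using has_vector_derivative_lift[OF \<open>open S\<close> holF dh] f F'
    by (simp add: continuous_on_eq_continuous_at divide_inverse)
  \<comment> \<open>Bootstrap: f' = h' * (inverse \<circ> deriv F) \<circ> f is as often differentiable as f.\<close>
  have "differentiable_upto n f" for n
  proof (induction n)
    case 0
    then show ?case
      using f' differentiableI_vector by auto
  next
    case (Suc n)
    then have "differentiable_upto n (\<lambda>t. inverse (deriv F (f t)))"
      using differentiable_upto_holomorphic_comp[OF \<open>open ?S'\<close> inv_holF'] f(2) F' by blast
    then show ?case
      using h' by (intro differentiable_upto_SucI[OF f'] differentiable_upto_mult)
  qed
  then show ?thesis
    by (simp add: smooth_fun_iff_differentiable_upto)
qed

lemma homeomorphism_preimage_injective_holomorphic:
  assumes holF: "F holomorphic_on S" and "open S" and injF: "inj_on F S"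
    and "open T" and "T \<subseteq> F ` S"
  obtains G where "homeomorphism (S \<inter> F -` T) T F G"
proof (rule homeomorphism_injective_open_map)
  have contF: "continuous_on S F"
    using holF holomorphic_on_imp_continuous_on by blast
  then show "continuous_on (S \<inter> F -` T) F"
    by (rule continuous_on_subset) blast
  show "F ` (S \<inter> F -` T) = T"
    using \<open>T \<subseteq> F ` S\<close> by blast
  show "inj_on F (S \<inter> F -` T)"
    using injF by (rule inj_on_subset) blast
  fix U
  assume "openin (top_of_set (S \<inter> F -` T)) U"
  then have "open U" "U \<subseteq> S" "F ` U \<subseteq> T"
    using continuous_open_preimage[OF contF \<open>open S\<close> \<open>open T\<close>]
    by (auto dest: openin_open_trans openin_imp_subset)
  then show "openin (top_of_set T) (F ` U)"
    using holF injF
    by (intro open_subset open_mapping_thm3) (auto intro: holomorphic_on_subset inj_on_subset)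
qed (use that in blast)

lemma evenly_covered_by_injective_balls:
  fixes F :: "complex \<Rightarrow> complex"
  assumes holF: "F holomorphic_on UNIV" and "open T" "T \<subseteq> S"
    and inj: "\<And>z. z \<in> Z \<Longrightarrow> inj_on F (ball z r)"
    and disj: "\<And>z z'. z \<in> Z \<Longrightarrow> z' \<in> Z \<Longrightarrow> z \<noteq> z' \<Longrightarrow> disjnt (ball z r) (ball z' r)"
    and onto: "\<And>z. z \<in> Z \<Longrightarrow> T \<subseteq> F ` ball z r"
    and cover: "F -` T \<subseteq> (\<Union>z\<in>Z. ball z r)"
  shows "\<exists>v. \<Union>v = F -` S \<inter> F -` T \<and> (\<forall>u\<in>v. openin (top_of_set (F -` S)) u) \<and>
           pairwise disjnt v \<and> (\<forall>u\<in>v. \<exists>q. homeomorphism u T F q)"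
proof (intro exI conjI)
  let ?v = "(\<lambda>z. ball z r \<inter> F -` T) ` Z"
  show "\<Union>?v = F -` S \<inter> F -` T"
    using cover \<open>T \<subseteq> S\<close> by blast
  show "\<forall>u\<in>?v. openin (top_of_set (F -` S)) u"
  proof
    fix u
    assume "u \<in> ?v"
    then obtain z where u: "u = ball z r \<inter> F -` T"
      by blast
    have "continuous_on (ball z r) F"
      using holF holomorphic_on_imp_continuous_on holomorphic_on_subset subset_UNIV by blast
    then have "open u"
      unfolding u using \<open>open T\<close> by (intro continuous_open_preimage open_ball)
    moreover have "u \<subseteq> F -` S"
      unfolding u using \<open>T \<subseteq> S\<close> by auto
    ultimately show "openin (top_of_set (F -` S)) u"
      by (rule open_subset[rotated])
  qed
  show "pairwise disjnt ?v"
  proof (rule pairwise_imageI)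
    fix z z'
    assume "z \<in> Z" "z' \<in> Z" "z \<noteq> z'"
    then have "disjnt (ball z r) (ball z' r)"
      by (rule disj)
    then show "disjnt (ball z r \<inter> F -` T) (ball z' r \<inter> F -` T)"
      by (auto simp: disjnt_def)
  qed
  show "\<forall>u\<in>?v. \<exists>q. homeomorphism u T F q"
  proof
    fix u
    assume "u \<in> ?v"
    then obtain z where "z \<in> Z" and u: "u = ball z r \<inter> F -` T"
      by blast
    have "F holomorphic_on ball z r"
      using holF holomorphic_on_subset subset_UNIV by blast
    then obtain q where "homeomorphism u T F q"
      unfolding u using homeomorphism_preimage_injective_holomorphic[OF _ open_ball inj \<open>open T\<close> onto]
        \<open>z \<in> Z\<close> by blast
    then show "\<exists>q. homeomorphism u T F q"
      by blast
  qed
qed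

section \<open>Polynomials as covering maps\<close>

lemma degree_diff_const:
  fixes P :: "'a::comm_ring poly"
  assumes "degree P > 0"
  shows "degree (P - [:w:]) = degree P"
  using assms by (simp add: diff_conv_add_uminus degree_add_eq_left)

lemma poly_holomorphic_on [holomorphic_intros]: "poly p holomorphic_on S"
  by (meson field_differentiable_at_within field_differentiable_def holomorphic_on_def poly_DERIV)

lemma deriv_poly: "deriv (poly p) z = poly (pderiv p) z"
  by (rule DERIV_imp_deriv[OF poly_DERIV])

lemma poly_surjective:
  fixes P :: "complex poly"
  assumes "degree P > 0"
  obtains z where "poly P z = w"
proof -
  have "\<not> constant (poly (P - [:w:]))"
    using assms by (simp add: constant_degree degree_diff_const)
  then obtain z where "poly (P - [:w:]) z = 0"
    using fundamental_theorem_of_algebra by blast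
  then show ?thesis
    using that by simp
qed

lemma finite_poly_fibre:
  fixes P :: "complex poly"
  assumes "degree P > 0"
  shows "finite {z. poly P z = w}"
proof -
  have "P - [:w:] \<noteq> 0"
    using assms degree_diff_const[of P w] by auto
  then have "finite {z. poly (P - [:w:]) z = 0}"
    by (rule poly_roots_finite)
  then show ?thesis
    by simp
qed

lemma finite_poly_critical_values:
  fixes P :: "complex poly"
  assumes "degree P > 0"
  shows "finite (poly P ` {z. poly (pderiv P) z = 0})"
  using assms by (simp add: poly_roots_finite pderiv_eq_0_iff)

lemma poly_near_value_imp_near_fibre:
  fixes P :: "complex poly"
  assumes "degree P > 0" and "r > 0"
  obtains \<delta> where "\<delta> > 0" "\<And>x. dist (poly P x) w < \<delta> \<Longrightarrow> \<exists>z. poly P z = w \<and> dist z x < r"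
proof -
  \<comment> \<open>If x is r-far from every root z_i of P - w = a \<Prod>(X - z_i), then |P x - w| \<ge> |a| r^n.\<close>
  define p where "p = P - [:w:]"
  define n where "n = degree p"
  obtain root where p: "smult (lead_coeff p) (\<Prod>i<n. [:- root i, 1:]) = p"
    unfolding n_def using complex_poly_decompose' by blast
  have poly_p: "poly p x = lead_coeff p * (\<Prod>i<n. x - root i)" for x
    by (subst p[symmetric]) (simp add: poly_prod)
  have "n > 0"
    unfolding n_def p_def using assms by (simp only: degree_diff_const)
  then have "lead_coeff p \<noteq> 0"
    by (auto simp: n_def)
  show ?thesis
  proof
    show "norm (lead_coeff p) * r ^ n > 0"
      using \<open>lead_coeff p \<noteq> 0\<close> \<open>r > 0\<close> by simp
  next
    fix x
    assume near: "dist (poly P x) w < norm (lead_coeff p) * r ^ n"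
    have "\<exists>i<n. dist (root i) x < r"
    proof (rule ccontr)
      assume "\<not> ?thesis"
      then have "r \<le> dist (root i) x" if "i < n" for i
        using that by (meson not_le)
      then have "r \<le> norm (x - root i)" if "i < n" for i
        using that by (simp add: dist_norm norm_minus_commute)
      then have "r ^ n \<le> (\<Prod>i<n. norm (x - root i))"
        using prod_mono[of "{..<n}" "\<lambda>_. r" "\<lambda>i. norm (x - root i)"] \<open>r > 0\<close> by simp
      then have "norm (lead_coeff p) * r ^ n \<le> norm (poly p x)"
        by (simp add: poly_p norm_mult prod_norm mult_left_mono)
      then show False
        using near by (simp add: p_def dist_norm)
    qed
    moreover have "poly P (root i) = w" if "i < n" for i
    proof -
      have "poly p (root i) = 0"
        using that by (auto simp: poly_p)
      then show ?thesis
        by (simp add: p_def)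
    qed
    ultimately show "\<exists>z. poly P z = w \<and> dist z x < r"
      by blast
  qed
qed

lemma poly_fibre_isolating_radius:
  fixes P :: "complex poly"
  assumes "degree P > 0" and regular: "\<And>z. poly P z = w \<Longrightarrow> poly (pderiv P) z \<noteq> 0"
  obtains r where "r > 0" "\<And>z. poly P z = w \<Longrightarrow> inj_on (poly P) (ball z r)"
    "\<And>z z'. poly P z = w \<Longrightarrow> poly P z' = w \<Longrightarrow> z \<noteq> z' \<Longrightarrow> disjnt (ball z r) (ball z' r)"
proof -
  let ?Z = "{z. poly P z = w}"
  have inj: "\<forall>\<^sub>F r in at_right 0. inj_on (poly P) (ball z r)" if z: "z \<in> ?Z" for z
  proof -
    have "deriv (poly P) z \<noteq> 0"
      using regular z by (simp add: deriv_poly)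
    then obtain r0 where "r0 > 0" and inj_r0: "inj_on (poly P) (ball z r0)"
      using has_complex_derivative_locally_injective[OF poly_holomorphic_on UNIV_I open_UNIV] by blast
    have "\<forall>\<^sub>F r in at_right 0. r \<in> {0<..<r0}"
      using \<open>r0 > 0\<close> by (rule eventually_at_right_real)
    then show ?thesis
      by (rule eventually_mono) (use inj_r0 in \<open>auto intro: inj_on_subset\<close>)
  qed
  have disj: "\<forall>\<^sub>F r in at_right 0. z \<noteq> z' \<longrightarrow> disjnt (ball z r) (ball z' r)" for z z' :: complex
  proof (cases "z = z'")
    case False
    then have "\<forall>\<^sub>F r in at_right 0. r \<in> {0<..<dist z z' / 2}"
      by (intro eventually_at_right_real) simp
    then show ?thesis
      by (rule eventually_mono) (auto simp: disjnt_def intro!: disjoint_ballI)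
  qed simp
  have fin: "finite ?Z"
    using \<open>degree P > 0\<close> by (rule finite_poly_fibre)
  have "\<forall>\<^sub>F r in at_right 0. 0 < r \<and> (\<forall>z\<in>?Z. inj_on (poly P) (ball z r))
      \<and> (\<forall>z\<in>?Z. \<forall>z'\<in>?Z. z \<noteq> z' \<longrightarrow> disjnt (ball z r) (ball z' r))"
    using eventually_at_right_less
    by (intro eventually_conj eventually_ball_finite fin ballI inj disj) auto
  then obtain r where "0 < r" "\<forall>z\<in>?Z. inj_on (poly P) (ball z r)"
    "\<forall>z\<in>?Z. \<forall>z'\<in>?Z. z \<noteq> z' \<longrightarrow> disjnt (ball z r) (ball z' r)"
    by (auto dest: eventually_happens'[OF trivial_limit_at_right_real])
  then show ?thesis
    using that by simp
qed

lemma poly_covering_space: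
  fixes P :: "complex poly" and K :: "complex set"
  assumes "degree P > 0" and "finite K" and critical: "\<And>z. poly (pderiv P) z = 0 \<Longrightarrow> poly P z \<in> K"
  shows "covering_space (poly P -` (- K)) (poly P) (- K)"
proof
  show "continuous_on (poly P -` (- K)) (poly P)"
    by (intro holomorphic_on_imp_continuous_on poly_holomorphic_on)
  show "poly P ` (poly P -` (- K)) = - K"
    using poly_surjective[OF \<open>degree P > 0\<close>] by (metis surj_def surj_image_vimage_eq)
  fix w
  assume "w \<in> - K"
  then have regular: "\<And>z. poly P z = w \<Longrightarrow> poly (pderiv P) z \<noteq> 0"
    using critical by blast
  let ?Z = "{z. poly P z = w}"
  obtain r where "r > 0" and inj: "\<And>z. poly P z = w \<Longrightarrow> inj_on (poly P) (ball z r)"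
    and disj: "\<And>z z'. poly P z = w \<Longrightarrow> poly P z' = w \<Longrightarrow> z \<noteq> z' \<Longrightarrow> disjnt (ball z r) (ball z' r)"
    using poly_fibre_isolating_radius[OF \<open>degree P > 0\<close> regular] by blast
  obtain \<delta> where "\<delta> > 0" and near: "\<And>x. dist (poly P x) w < \<delta> \<Longrightarrow> \<exists>z. poly P z = w \<and> dist z x < r"
    using poly_near_value_imp_near_fibre[OF \<open>degree P > 0\<close> \<open>r > 0\<close>] by blast
  obtain e where "e > 0" "ball w e \<subseteq> - K"
    using \<open>finite K\<close> \<open>w \<in> - K\<close> open_contains_ball finite_imp_closed open_Compl by blast
  define T where "T = ball w (min \<delta> e) \<inter> (\<Inter>z\<in>?Z. poly P ` ball z r)"
  have "open (poly P ` ball z r)" if "poly P z = w" for z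
    using inj[OF that] by (intro open_mapping_thm3 poly_holomorphic_on open_ball)
  then have "open T"
    unfolding T_def using finite_poly_fibre[OF \<open>degree P > 0\<close>] by (intro open_Int open_ball open_INT) auto
  have "w \<in> T"
    unfolding T_def using \<open>\<delta> > 0\<close> \<open>e > 0\<close> \<open>r > 0\<close> by (auto intro: rev_image_eqI)
  have "T \<subseteq> - K"
    unfolding T_def using \<open>ball w e \<subseteq> - K\<close> by auto
  have "\<exists>v. \<Union>v = poly P -` (- K) \<inter> poly P -` T \<and>
      (\<forall>u\<in>v. openin (top_of_set (poly P -` (- K))) u) \<and>
      pairwise disjnt v \<and> (\<forall>u\<in>v. \<exists>q. homeomorphism u T (poly P) q)"
  proof (rule evenly_covered_by_injective_balls[OF poly_holomorphic_on \<open>open T\<close> \<open>T \<subseteq> - K\<close>])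
    show "inj_on (poly P) (ball z r)" if "z \<in> ?Z" for z
      using inj that by blast
    show "disjnt (ball z r) (ball z' r)" if "z \<in> ?Z" "z' \<in> ?Z" "z \<noteq> z'" for z z'
      using disj that by blast
    show "T \<subseteq> poly P ` ball z r" if "z \<in> ?Z" for z
      unfolding T_def using that by blast
    show "poly P -` T \<subseteq> (\<Union>z\<in>?Z. ball z r)"
    proof
      fix x
      assume "x \<in> poly P -` T"
      then have "dist (poly P x) w < \<delta>"
        by (auto simp: T_def dist_commute)
      then obtain z where "poly P z = w" "dist z x < r"
        using near by blast
      then show "x \<in> (\<Union>z\<in>?Z. ball z r)"
        by auto
    qed
  qed
  moreover have "openin (top_of_set (- K)) T"
    using \<open>T \<subseteq> - K\<close> \<open>open T\<close> by (rule open_subset)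
  ultimately show "\<exists>T. w \<in> T \<and> openin (top_of_set (- K)) T \<and>
      (\<exists>v. \<Union>v = poly P -` (- K) \<inter> poly P -` T \<and> (\<forall>u\<in>v. openin (top_of_set (poly P -` (- K))) u) \<and>
           pairwise disjnt v \<and> (\<forall>u\<in>v. \<exists>q. homeomorphism u T (poly P) q))"
    using \<open>w \<in> T\<close> by blast
qed

lemma smooth_poly_lift:
  fixes P :: "complex poly"
  assumes "degree P > 0" and h: "smooth_fun h"
    and regular: "\<And>t. h t \<notin> poly P ` {z. poly (pderiv P) z = 0}"
  obtains f where "smooth_fun f" "\<And>t. poly P (f t) = h t"
proof -
  define K where "K = poly P ` {z. poly (pderiv P) z = 0}"
  have cov: "covering_space (poly P -` (- K)) (poly P) (- K)"
    using \<open>degree P > 0\<close> finite_poly_critical_values[OF \<open>degree P > 0\<close>]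
    unfolding K_def by (rule poly_covering_space) auto
  have cont: "continuous_on UNIV h"
    using h smooth_fun_imp_differentiable
    by (intro continuous_at_imp_continuous_on ballI differentiable_imp_continuous_within) auto
  have avoid: "h \<in> UNIV \<rightarrow> - K"
    using regular by (auto simp: K_def)
  obtain f where "continuous_on UNIV f" and f_regular: "f \<in> UNIV \<rightarrow> poly P -` (- K)"
    and lift: "\<And>t. t \<in> UNIV \<Longrightarrow> poly P (f t) = h t"
  proof (rule covering_space_lift[OF cov convex_imp_simply_connected[OF convex_UNIV]
          open_imp_locally_path_connected[OF open_UNIV] cont avoid])
    fix f :: "real \<Rightarrow> complex"
    assume "continuous_on UNIV f" "f \<in> UNIV \<rightarrow> poly P -` (- K)" "\<And>t. t \<in> UNIV \<Longrightarrow> poly P (f t) = h t"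
    then show thesis
      by (rule that)
  qed
  have "deriv (poly P) (f t) \<noteq> 0" for t
    using f_regular by (auto simp: deriv_poly K_def)
  then have "smooth_fun f"
    using smooth_fun_lift[OF open_UNIV poly_holomorphic_on h \<open>continuous_on UNIV f\<close> UNIV_I lift[OF UNIV_I]]
    by blast
  then show ?thesis
    using lift that by blast
qed

section \<open>Density of the range\<close>

lemma exists_small_shift_avoiding:
  fixes g :: "real \<Rightarrow> complex" and K :: "complex set"
  assumes g: "\<And>t. g differentiable (at t)" and "finite K" and "\<epsilon> > 0"
  obtains c where "norm c < \<epsilon>" "\<And>t. g t + c \<notin> K"
proof -
  define N where "N = (\<Union>k\<in>K. range (\<lambda>t. k - g t))"
  have "negligible N"
    unfolding N_def
  proof (intro negligible_Union finite_imageI \<open>finite K\<close>, clarify)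
    fix k
    have "(\<lambda>t. k - g t) differentiable_on UNIV"
      using g by (intro differentiable_at_imp_differentiable_on) (auto intro: derivative_intros)
    then show "negligible (range (\<lambda>t. k - g t))"
      by (intro negligible_differentiable_image_lowdim) auto
  qed
  moreover have "\<not> negligible (ball (0::complex) \<epsilon>)"
    using \<open>\<epsilon> > 0\<close> by (intro open_not_negligible) auto
  ultimately obtain c where "c \<in> ball 0 \<epsilon>" "c \<notin> N"
    using negligible_subset by blast
  then show ?thesis
    by (intro that[of c]) (auto simp: N_def)
qed

theorem proposition20:
  fixes P :: "complex poly"
  assumes "degree P > 0" and "poly P 0 = 0"
  shows "\<forall>g. smooth_fun g \<longrightarrow> (\<forall>k::nat. \<forall>\<epsilon>>0.
           \<exists>f. smooth_fun f \<and> seminorm_p k (\<lambda>t. poly P (f t) - g t) < \<epsilon>)"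
proof (intro allI impI)
  fix g :: "real \<Rightarrow> complex" and k :: nat and \<epsilon> :: real
  assume g: "smooth_fun g" and "\<epsilon> > 0"
  obtain c where "norm c < \<epsilon>" and c: "\<And>t. g t + c \<notin> poly P ` {z. poly (pderiv P) z = 0}"
    using exists_small_shift_avoiding[OF smooth_fun_imp_differentiable[OF g]
        finite_poly_critical_values[OF \<open>degree P > 0\<close>] \<open>\<epsilon> > 0\<close>] by blast
  obtain f where "smooth_fun f" and lift: "\<And>t. poly P (f t) = g t + c"
    using smooth_poly_lift[OF \<open>degree P > 0\<close> smooth_fun_add_const[OF g] c] by blast
  have "seminorm_p k (\<lambda>t. poly P (f t) - g t) = norm c"
    by (simp add: lift seminorm_p_const)
  then show "\<exists>f. smooth_fun f \<and> seminorm_p k (\<lambda>t. poly P (f t) - g t) < \<epsilon>"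
    using \<open>smooth_fun f\<close> \<open>norm c < \<epsilon>\<close> by auto
qed

end
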